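(* Let $G$ be a finitely generated group containing a finite index subgroup isomorphic to $\mathbb{Z}$. Then for every finite generating set $S$ of $G$, the metric space $(G,d_S)$ admits a bilipschitz embedding into $\mathbb{R}$.
   Context: $d_S$ is the word metric, i.e. the shortest path distance on the vertex set $G$ of the Cayley graph $\mathrm{Cay}(G,S)$ (the Cayley graph is regarded as the set of group elements, not as a 1-dimensional complex). A bilipschitz embedding is a map $f$ with $c\,d(u,v)\le |f(u)-f(v)|\le C\,d(u,v)$ for constants $0<c\le C<\infty$. *)

theory Defs
  imports Complex_Main "HOL-Algebra.Algebra"
begin

definition word_dist :: "('a, 'b) monoid_scheme \<Rightarrow> 'a set \<Rightarrow> 'a \<Rightarrow> 'a \<Rightarrow> nat" where
  "word_dist G S g h = (LEAST n. \<exists>ws. length ws = n \<and> set ws \<subseteq> S \<union> m_inv G ` S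
       \<and> foldr (\<lambda>x y. x \<otimes>\<^bsub>G\<^esub> y) ws \<one>\<^bsub>G\<^esub> = inv\<^bsub>G\<^esub> g \<otimes>\<^bsub>G\<^esub> h)"

definition finitely_generated :: "('a, 'b) monoid_scheme \<Rightarrow> bool" where
  "finitely_generated G \<longleftrightarrow> (\<exists>S. finite S \<and> S \<subseteq> carrier G \<and> generate G S = carrier G)"

definition bilipschitz_embeddable_real :: "'a set \<Rightarrow> ('a \<Rightarrow> 'a \<Rightarrow> real) \<Rightarrow> bool" where
  "bilipschitz_embeddable_real A d \<longleftrightarrow> (\<exists>(f :: 'a \<Rightarrow> real) lo hi. 0 < lo \<and> lo \<le> hi \<and>
      (\<forall>u\<in>A. \<forall>v\<in>A. lo * d u v \<le> abs (f u - f v) \<and> abs (f u - f v) \<le> hi * d u v))"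

end

theory Submission
  imports Defs
begin

text \<open>Let \<open>\<psi>\<close> identify the finite-index subgroup \<open>H\<close> with \<open>\<int>\<close>, let \<open>t\<close> be the element with
  \<open>\<psi> t = 1\<close>, and fix a representative \<open>r\<^sub>c\<close> of every right coset \<open>c\<close>. Writing \<open>g = h r\<^bsub>Hg\<^esub>\<close> with
  \<open>h \<in> H\<close>, send \<open>g\<close> to the two-digit number \<open>(k + 1) \<psi> h + i(Hg)\<close> in base \<open>k + 1\<close>, where \<open>i\<close>
  enumerates the \<open>k\<close> cosets. Right multiplication by a generator changes \<open>\<psi> h\<close> by an amount
  depending only on the coset and the generator, so this map is Lipschitz. Conversely
  \<open>u\<inverse> v = r\<inverse> t\<^sup>n r'\<close> with \<open>n\<close> the difference of the \<open>\<psi>\<close>-digits, so the word length of \<open>u\<inverse> v\<close> is at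
  most a constant plus a multiple of \<open>|n|\<close>; and \<open>|n|\<close> is bounded by the difference of the images,
  which is at least \<open>1\<close> for \<open>u \<noteq> v\<close>.\<close>

lemma bilipschitz_embeddable_realI:
  fixes f :: "'a \<Rightarrow> real" and d :: "'a \<Rightarrow> 'a \<Rightarrow> real"
  assumes separated: "\<And>u v. u \<in> A \<Longrightarrow> v \<in> A \<Longrightarrow> u \<noteq> v \<Longrightarrow> 1 \<le> \<bar>f u - f v\<bar>"
    and diag: "\<And>u. u \<in> A \<Longrightarrow> d u u = 0"
    and nonneg: "\<And>u v. u \<in> A \<Longrightarrow> v \<in> A \<Longrightarrow> 0 \<le> d u v"
    and lower: "\<And>u v. u \<in> A \<Longrightarrow> v \<in> A \<Longrightarrow> d u v \<le> a + b * \<bar>f u - f v\<bar>"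
    and upper: "\<And>u v. u \<in> A \<Longrightarrow> v \<in> A \<Longrightarrow> \<bar>f u - f v\<bar> \<le> c * d u v"
    and "0 \<le> a" "0 \<le> b"
  shows "bilipschitz_embeddable_real A d"
  unfolding bilipschitz_embeddable_real_def
proof (intro exI conjI ballI)
  define lo where "lo = 1 / (a + b + 1)"
  have lo_pos: "0 < lo" using \<open>0 \<le> a\<close> \<open>0 \<le> b\<close> by (simp add: lo_def)
  show "0 < lo" by (fact lo_pos)
  show "lo \<le> max c lo" by simp
  fix u v assume u: "u \<in> A" and v: "v \<in> A"
  show "lo * d u v \<le> \<bar>f u - f v\<bar>"
  proof (cases "u = v")
    case True
    then show ?thesis using diag u by simp
  next
    case False
    have sep: "1 \<le> \<bar>f u - f v\<bar>" using separated[OF u v False] .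
    have "d u v \<le> a * \<bar>f u - f v\<bar> + b * \<bar>f u - f v\<bar>"
      using lower[OF u v] mult_left_mono[OF sep \<open>0 \<le> a\<close>] by simp
    also have "\<dots> \<le> (a + b + 1) * \<bar>f u - f v\<bar>" by (simp add: algebra_simps)
    finally show ?thesis using \<open>0 \<le> a\<close> \<open>0 \<le> b\<close> by (simp add: lo_def field_simps)
  qed
  show "\<bar>f u - f v\<bar> \<le> max c lo * d u v"
    using upper[OF u v] mult_right_mono[OF max.cobounded1 nonneg[OF u v], of c lo] by linarith
qed

lemma abs_le_abs_mult_add:
  fixes x y K :: int
  assumes "\<bar>y\<bar> \<le> K"
  shows "\<bar>x\<bar> \<le> \<bar>(K + 1) * x + y\<bar>"
proof (cases "x = 0")
  case False
  then have "K * 1 \<le> K * \<bar>x\<bar>" using assms by (intro mult_left_mono) auto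
  moreover have "\<bar>(K + 1) * x\<bar> = K * \<bar>x\<bar> + \<bar>x\<bar>"
  proof -
    have "0 \<le> K" using assms by linarith
    then have "\<bar>(K + 1) * x\<bar> = (K + 1) * \<bar>x\<bar>" by (simp add: abs_mult abs_of_nonneg)
    then show ?thesis by (simp add: distrib_right)
  qed
  ultimately show ?thesis using assms by linarith
qed simp

locale generated_group = group G for G (structure) +
  fixes S :: "'a set"
  assumes generators_closed: "S \<subseteq> carrier G"
    and generate_generators: "generate G S = carrier G"
begin

definition letters :: "'a set" where
  "letters = S \<union> m_inv G ` S"

definition word_prod :: "'a list \<Rightarrow> 'a" where
  "word_prod ws = foldr (\<otimes>) ws \<one>"

definition word_length :: "'a \<Rightarrow> nat" where
  "word_length x = (LEAST n. \<exists>ws. length ws = n \<and> set ws \<subseteq> letters \<and> word_prod ws = x)"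

lemma word_dist_eq_word_length: "word_dist G S u v = word_length (inv u \<otimes> v)"
  unfolding word_dist_def word_length_def word_prod_def letters_def by simp

lemma letters_closed: "letters \<subseteq> carrier G"
  using generators_closed by (auto simp: letters_def)

lemma inv_in_letters: "s \<in> letters \<Longrightarrow> inv s \<in> letters"
  using generators_closed by (auto simp: letters_def)

lemma word_prod_closed: "set ws \<subseteq> letters \<Longrightarrow> word_prod ws \<in> carrier G"
  using letters_closed by (induction ws) (auto simp: word_prod_def)

lemma word_prod_Cons: "word_prod (s # ws) = s \<otimes> word_prod ws"
  by (simp add: word_prod_def)

lemma word_prod_append:
  "set xs \<subseteq> letters \<Longrightarrow> set ys \<subseteq> letters \<Longrightarrow> word_prod (xs @ ys) = word_prod xs \<otimes> word_prod ys"
proof (induction xs)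
  case Nil
  then show ?case using word_prod_closed by (simp add: word_prod_def)
next
  case (Cons s xs)
  then have "s \<in> carrier G" using letters_closed by auto
  with Cons show ?case
    using word_prod_closed[of xs] word_prod_closed[of ys] by (simp add: word_prod_Cons m_assoc)
qed

lemma word_prod_rev_inv:
  "set ws \<subseteq> letters \<Longrightarrow> word_prod (rev (map (m_inv G) ws)) = inv (word_prod ws)"
proof (induction ws)
  case Nil
  then show ?case by (simp add: word_prod_def)
next
  case (Cons s ws)
  have s: "s \<in> letters" "s \<in> carrier G" using Cons letters_closed by auto
  have "set (rev (map (m_inv G) ws)) \<subseteq> letters" "set [inv s] \<subseteq> letters"
    using Cons s inv_in_letters by auto
  then have "word_prod (rev (map (m_inv G) (s # ws))) = word_prod (rev (map (m_inv G) ws)) \<otimes> word_prod [inv s]"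
    by (simp add: word_prod_append)
  also have "\<dots> = inv (word_prod ws) \<otimes> inv s"
    using Cons s by (simp add: word_prod_def)
  also have "\<dots> = inv (s \<otimes> word_prod ws)"
    using Cons s word_prod_closed[of ws] by (simp add: inv_mult_group)
  finally show ?case by (simp add: word_prod_Cons)
qed

lemma exists_word: "x \<in> carrier G \<Longrightarrow> \<exists>ws. set ws \<subseteq> letters \<and> word_prod ws = x"
proof -
  assume "x \<in> carrier G"
  then have "x \<in> generate G S" using generate_generators by simp
  then show ?thesis
  proof (induction rule: generate.induct)
    case one
    show ?case by (rule exI[of _ "[]"]) (simp add: word_prod_def)
  next
    case (incl s)
    then show ?case using generators_closed by (intro exI[of _ "[s]"]) (auto simp: word_prod_def letters_def)
  next
    case (inv s)
    then show ?case using generators_closed by (intro exI[of _ "[inv s]"]) (auto simp: word_prod_def letters_def)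
  next
    case (eng x y)
    then obtain xs ys where "set xs \<subseteq> letters" "word_prod xs = x" "set ys \<subseteq> letters" "word_prod ys = y"
      by blast
    then show ?case by (intro exI[of _ "xs @ ys"]) (simp add: word_prod_append)
  qed
qed

lemma obtain_shortest_word:
  assumes "x \<in> carrier G"
  obtains ws where "length ws = word_length x" "set ws \<subseteq> letters" "word_prod ws = x"
proof -
  have "\<exists>n ws. length ws = n \<and> set ws \<subseteq> letters \<and> word_prod ws = x"
    using exists_word[OF assms] by blast
  from LeastI_ex[OF this] show ?thesis
    using that unfolding word_length_def by blast
qed

lemma word_length_le: "set ws \<subseteq> letters \<Longrightarrow> word_prod ws = x \<Longrightarrow> word_length x \<le> length ws"
  unfolding word_length_def by (rule Least_le) blast

lemma word_length_one [simp]: "word_length \<one> = 0"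
  using word_length_le[of "[]" \<one>] by (simp add: word_prod_def)

lemma word_length_mult:
  assumes "x \<in> carrier G" "y \<in> carrier G"
  shows "word_length (x \<otimes> y) \<le> word_length x + word_length y"
proof -
  obtain xs where "length xs = word_length x" "set xs \<subseteq> letters" "word_prod xs = x"
    using obtain_shortest_word[OF assms(1)] by blast
  moreover obtain ys where "length ys = word_length y" "set ys \<subseteq> letters" "word_prod ys = y"
    using obtain_shortest_word[OF assms(2)] by blast
  ultimately show ?thesis using word_length_le[of "xs @ ys" "x \<otimes> y"] by (simp add: word_prod_append)
qed

lemma word_length_inv [simp]:
  assumes "x \<in> carrier G"
  shows "word_length (inv x) = word_length x"
proof -
  have le: "word_length (inv y) \<le> word_length y" if y: "y \<in> carrier G" for y
  proof -
    obtain ws where "length ws = word_length y" "set ws \<subseteq> letters" "word_prod ws = y"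
      using obtain_shortest_word[OF y] by blast
    moreover have "set (rev (map (m_inv G) ws)) \<subseteq> letters"
      using \<open>set ws \<subseteq> letters\<close> inv_in_letters by auto
    ultimately show ?thesis
      using word_length_le[of "rev (map (m_inv G) ws)" "inv y"] word_prod_rev_inv by simp
  qed
  show ?thesis using le[of x] le[of "inv x"] assms by simp
qed

lemma word_length_nat_pow: "x \<in> carrier G \<Longrightarrow> word_length (x [^] (n::nat)) \<le> n * word_length x"
proof (induction n)
  case (Suc n)
  have "word_length (x [^] Suc n) \<le> word_length (x [^] n) + word_length x"
    using word_length_mult[of "x [^] n" x] Suc.prems by simp
  then show ?case using Suc.IH Suc.prems unfolding mult_Suc by linarith
next
  case 0
  then show ?case by simp
qed

lemma word_length_int_pow:
  assumes "x \<in> carrier G"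
  shows "word_length (x [^] (n::int)) \<le> nat \<bar>n\<bar> * word_length x"
proof -
  obtain m where "n = int m \<or> n = - int m" by (metis int_cases2)
  then show ?thesis
    using word_length_nat_pow[OF assms, of m] assms by (auto simp: int_pow_int int_pow_neg_int)
qed

lemma word_length_lipschitz:
  fixes f :: "'a \<Rightarrow> int"
  assumes step: "\<And>g s. g \<in> carrier G \<Longrightarrow> s \<in> letters \<Longrightarrow> \<bar>f (g \<otimes> s) - f g\<bar> \<le> C"
    and u: "u \<in> carrier G" and v: "v \<in> carrier G"
  shows "\<bar>f u - f v\<bar> \<le> C * int (word_length (inv u \<otimes> v))"
proof -
  have along_word: "\<bar>f (g \<otimes> word_prod ws) - f g\<bar> \<le> C * int (length ws)"
    if "g \<in> carrier G" "set ws \<subseteq> letters" for g ws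
    using that
  proof (induction ws arbitrary: g)
    case Nil
    then show ?case by (simp add: word_prod_def)
  next
    case (Cons s ws)
    have s: "s \<in> carrier G" "s \<in> letters" using Cons.prems letters_closed by auto
    have eq: "g \<otimes> word_prod (s # ws) = (g \<otimes> s) \<otimes> word_prod ws"
      using Cons.prems s word_prod_closed[of ws] by (simp add: word_prod_Cons m_assoc)
    have "\<bar>f ((g \<otimes> s) \<otimes> word_prod ws) - f (g \<otimes> s)\<bar> \<le> C * int (length ws)"
      using Cons.IH[of "g \<otimes> s"] Cons.prems s by simp
    moreover have "\<bar>f (g \<otimes> s) - f g\<bar> \<le> C" using step Cons.prems s by simp
    moreover have "C * int (length (s # ws)) = C * int (length ws) + C"
      by (simp add: distrib_left)
    ultimately show ?case unfolding eq by linarith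
  qed
  have "inv u \<otimes> v \<in> carrier G" using u v by simp
  then obtain ws where ws: "length ws = word_length (inv u \<otimes> v)" "set ws \<subseteq> letters" "word_prod ws = inv u \<otimes> v"
    by (rule obtain_shortest_word)
  have "u \<otimes> word_prod ws = v" using ws u v by (simp add: m_assoc[symmetric])
  then show ?thesis using along_word[OF u ws(2)] ws(1) by (simp add: abs_minus_commute)
qed

end

locale virtually_integer = group G for G (structure) +
  fixes H :: "'a set" and \<psi> :: "'a \<Rightarrow> int"
    and coset_index :: "'a set \<Rightarrow> nat" and k :: nat
  assumes subgroup_H: "subgroup H G"
    and \<psi>_iso: "\<psi> \<in> iso (G\<lparr>carrier := H\<rparr>) integer_group"
    and coset_index_inj: "inj_on coset_index (rcosets H)"
    and coset_index_less: "c \<in> rcosets H \<Longrightarrow> coset_index c < k"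
begin

lemma finite_rcosets: "finite (rcosets H)"
  using coset_index_less by (intro inj_on_finite[OF coset_index_inj, of "{..<k}"]) auto

lemma H_subset: "H \<subseteq> carrier G"
  using subgroup_H by (rule subgroup.subset)

lemma \<psi>_mult: "x \<in> H \<Longrightarrow> y \<in> H \<Longrightarrow> \<psi> (x \<otimes> y) = \<psi> x + \<psi> y"
  using \<psi>_iso by (auto simp: iso_def hom_def)

lemma inj_on_\<psi>: "inj_on \<psi> H"
  using \<psi>_iso by (auto simp: iso_def bij_betw_def)

lemma \<psi>_image: "\<psi> ` H = UNIV"
  using \<psi>_iso by (auto simp: iso_def bij_betw_def)

definition generator :: 'a where
  "generator = inv_into H \<psi> 1"

lemma generator_in_H: "generator \<in> H"
  unfolding generator_def using \<psi>_image by (metis UNIV_I inv_into_into)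

lemma \<psi>_generator: "\<psi> generator = 1"
  unfolding generator_def using \<psi>_image by (metis UNIV_I f_inv_into_f)

lemma eq_generator_pow:
  assumes "x \<in> H"
  shows "x = generator [^] \<psi> x"
proof -
  have sub: "group (G\<lparr>carrier := H\<rparr>)"
    using subgroup_H by (rule subgroup.subgroup_is_group) (rule is_group)
  have hom: "\<psi> \<in> hom (G\<lparr>carrier := H\<rparr>) integer_group"
    using \<psi>_iso by (simp add: iso_def)
  have "\<psi> (generator [^] n) = n" for n :: int
    using hom_int_pow[OF hom _ sub group_integer_group] generator_in_H \<psi>_generator
      int_pow_consistent[OF subgroup_H generator_in_H] by simp
  moreover have "generator [^] n \<in> H" for n :: int
    using subgroup_int_pow_closed[OF subgroup_H generator_in_H] .
  ultimately show ?thesis using inj_onD[OF inj_on_\<psi>] assms by metis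
qed

definition coset_rep :: "'a set \<Rightarrow> 'a" where
  "coset_rep c = (SOME r. r \<in> c)"

definition H_part :: "'a \<Rightarrow> 'a" where
  "H_part g = g \<otimes> inv (coset_rep (H #> g))"

lemma coset_rep_in_coset: "g \<in> carrier G \<Longrightarrow> coset_rep (H #> g) \<in> H #> g"
  unfolding coset_rep_def using rcos_self[OF _ subgroup_H] by (metis someI)

lemma coset_rep_closed: "g \<in> carrier G \<Longrightarrow> coset_rep (H #> g) \<in> carrier G"
  using coset_rep_in_coset r_coset_subset_G[OF H_subset] by blast

lemma H_part_in_H:
  assumes g: "g \<in> carrier G"
  shows "H_part g \<in> H"
proof -
  have "coset_rep (H #> g) \<otimes> inv g \<in> H"
    using subgroup.rcos_module_imp[OF subgroup_H is_group g coset_rep_in_coset[OF g]] .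
  then have "inv (coset_rep (H #> g) \<otimes> inv g) \<in> H"
    by (rule subgroup.m_inv_closed[OF subgroup_H])
  then show ?thesis using g coset_rep_closed[OF g] by (simp add: H_part_def inv_mult_group)
qed

lemma H_part_mult_coset_rep: "g \<in> carrier G \<Longrightarrow> H_part g \<otimes> coset_rep (H #> g) = g"
  using coset_rep_closed by (simp add: H_part_def m_assoc)

definition cocycle :: "'a set \<Rightarrow> 'a \<Rightarrow> int" where
  "cocycle c s = \<psi> (coset_rep c \<otimes> s \<otimes> inv (coset_rep (c #> s)))"

lemma \<psi>_H_part_mult:
  assumes g: "g \<in> carrier G" and s: "s \<in> carrier G"
  shows "\<psi> (H_part (g \<otimes> s)) = \<psi> (H_part g) + cocycle (H #> g) s"
proof -
  define m where "m = coset_rep (H #> g) \<otimes> s \<otimes> inv (coset_rep (H #> (g \<otimes> s)))"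
  have gs: "g \<otimes> s \<in> carrier G" using g s by simp
  have mG: "m \<in> carrier G" using coset_rep_closed[OF g] coset_rep_closed[OF gs] s by (simp add: m_def)
  have "g \<otimes> inv (coset_rep (H #> g)) \<otimes> coset_rep (H #> g) = g"
    using g coset_rep_closed[OF g] by (simp add: m_assoc)
  then have eq: "H_part (g \<otimes> s) = H_part g \<otimes> m"
    using g s coset_rep_closed[OF g] coset_rep_closed[OF gs]
    by (simp add: m_def H_part_def m_assoc[symmetric])
  have "m = inv (H_part g) \<otimes> H_part (g \<otimes> s)"
    using eq H_part_in_H[OF g] H_subset mG by (auto simp: m_assoc[symmetric])
  then have mH: "m \<in> H"
    using H_part_in_H[OF g] H_part_in_H[OF gs] subgroup_H
    by (simp add: subgroup.m_closed subgroup.m_inv_closed)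
  have "H #> (g \<otimes> s) = (H #> g) #> s" using coset_mult_assoc[OF H_subset g s] by simp
  then show ?thesis using eq \<psi>_mult[OF H_part_in_H[OF g] mH] by (simp add: cocycle_def m_def)
qed

lemma inv_mult_eq_coset_rep_generator_pow:
  assumes u: "u \<in> carrier G" and v: "v \<in> carrier G"
  shows "inv u \<otimes> v = inv (coset_rep (H #> u))
    \<otimes> (generator [^] (\<psi> (H_part v) - \<psi> (H_part u)) \<otimes> coset_rep (H #> v))"
proof -
  define r where "r = coset_rep (H #> u)"
  define r' where "r' = coset_rep (H #> v)"
  have r: "r \<in> carrier G" "r' \<in> carrier G" using coset_rep_closed u v by (auto simp: r_def r'_def)
  have gen: "generator \<in> carrier G" using generator_in_H H_subset by auto
  have ab: "H_part u \<in> carrier G" "H_part v \<in> carrier G" using H_part_in_H H_subset u v by auto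
  have "inv (H_part u) \<otimes> H_part v = inv (generator [^] \<psi> (H_part u)) \<otimes> generator [^] \<psi> (H_part v)"
    using eq_generator_pow H_part_in_H u v by metis
  also have "\<dots> = generator [^] (\<psi> (H_part v) - \<psi> (H_part u))"
    using gen by (simp add: int_pow_neg[symmetric] int_pow_mult[symmetric])
  finally have ab_pow: "inv (H_part u) \<otimes> H_part v = generator [^] (\<psi> (H_part v) - \<psi> (H_part u))" .
  have "inv u \<otimes> v = inv (H_part u \<otimes> r) \<otimes> (H_part v \<otimes> r')"
    using H_part_mult_coset_rep u v by (simp add: r_def r'_def)
  also have "\<dots> = inv r \<otimes> ((inv (H_part u) \<otimes> H_part v) \<otimes> r')"
    using ab r by (simp add: inv_mult_group m_assoc)
  finally show ?thesis by (simp only: ab_pow r_def r'_def)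
qed

definition embedding :: "'a \<Rightarrow> int" where
  "embedding g = (int k + 1) * \<psi> (H_part g) + int (coset_index (H #> g))"

lemma coset_index_diff_le:
  assumes "u \<in> carrier G" "v \<in> carrier G"
  shows "\<bar>int (coset_index (H #> u)) - int (coset_index (H #> v))\<bar> \<le> int k"
  using coset_index_less[OF rcosetsI[OF H_subset assms(1)]] coset_index_less[OF rcosetsI[OF H_subset assms(2)]]
  by linarith

lemma abs_\<psi>_H_part_diff_le:
  assumes "u \<in> carrier G" "v \<in> carrier G"
  shows "\<bar>\<psi> (H_part u) - \<psi> (H_part v)\<bar> \<le> \<bar>embedding u - embedding v\<bar>"
proof -
  have "embedding u - embedding v = (int k + 1) * (\<psi> (H_part u) - \<psi> (H_part v))
      + (int (coset_index (H #> u)) - int (coset_index (H #> v)))"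
    unfolding embedding_def by (simp add: algebra_simps)
  then show ?thesis using abs_le_abs_mult_add[OF coset_index_diff_le[OF assms]] by simp
qed

lemma inj_on_embedding: "inj_on embedding (carrier G)"
proof (rule inj_onI)
  fix u v assume u: "u \<in> carrier G" and v: "v \<in> carrier G" and eq: "embedding u = embedding v"
  then have "\<psi> (H_part u) = \<psi> (H_part v)" using abs_\<psi>_H_part_diff_le[OF u v] by simp
  then have H_part_eq: "H_part u = H_part v"
    using inj_onD[OF inj_on_\<psi>] H_part_in_H u v by blast
  then have "coset_index (H #> u) = coset_index (H #> v)" using eq by (simp add: embedding_def)
  then have "H #> u = H #> v"
    using inj_onD[OF coset_index_inj] rcosetsI[OF H_subset] u v by blast
  then show "u = v" using H_part_mult_coset_rep u v H_part_eq by metis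
qed

end

locale virtually_integer_generated =
  virtually_integer G H \<psi> coset_index k + generated_group G S
  for G (structure) and H \<psi> coset_index k S +
  assumes finite_generators: "finite S"
begin

lemma finite_letters: "finite letters"
  using finite_generators by (simp add: letters_def)

lemma embedding_step_bound:
  obtains C where "\<And>g s. g \<in> carrier G \<Longrightarrow> s \<in> letters \<Longrightarrow> \<bar>embedding (g \<otimes> s) - embedding g\<bar> \<le> C"
proof -
  define M where "M = (\<Sum>p \<in> (rcosets H) \<times> letters. \<bar>case_prod cocycle p\<bar>)"
  have "\<bar>embedding (g \<otimes> s) - embedding g\<bar> \<le> (int k + 1) * M + int k"
    if g: "g \<in> carrier G" and s: "s \<in> letters" for g s
  proof -
    have sG: "s \<in> carrier G" using s letters_closed by auto
    have "\<bar>cocycle (H #> g) s\<bar> \<le> M"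
      unfolding M_def using rcosetsI[OF H_subset g] s finite_rcosets finite_letters
      by (intro member_le_sum[of "(H #> g, s)", where f = "\<lambda>p. \<bar>case_prod cocycle p\<bar>", simplified]) auto
    then have "(int k + 1) * \<bar>cocycle (H #> g) s\<bar> \<le> (int k + 1) * M"
      by (intro mult_left_mono) auto
    moreover have "embedding (g \<otimes> s) - embedding g = (int k + 1) * cocycle (H #> g) s
        + (int (coset_index (H #> (g \<otimes> s))) - int (coset_index (H #> g)))"
      unfolding embedding_def using \<psi>_H_part_mult[OF g sG] by (simp add: algebra_simps)
    moreover have "\<bar>int (coset_index (H #> (g \<otimes> s))) - int (coset_index (H #> g))\<bar> \<le> int k"
      using coset_index_diff_le g sG by simp
    moreover have "\<bar>(int k + 1) * cocycle (H #> g) s\<bar> = (int k + 1) * \<bar>cocycle (H #> g) s\<bar>"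
      by (simp add: abs_mult)
    ultimately show ?thesis by linarith
  qed
  then show ?thesis by (rule that)
qed

lemma embedding_lipschitz:
  obtains C where "\<And>u v. u \<in> carrier G \<Longrightarrow> v \<in> carrier G \<Longrightarrow>
    \<bar>embedding u - embedding v\<bar> \<le> C * int (word_length (inv u \<otimes> v))"
proof -
  obtain C where step: "\<And>g s. g \<in> carrier G \<Longrightarrow> s \<in> letters \<Longrightarrow>
      \<bar>embedding (g \<otimes> s) - embedding g\<bar> \<le> C"
    using embedding_step_bound by blast
  show ?thesis using word_length_lipschitz[OF step] by (rule that)
qed

lemma word_length_inv_mult_le:
  assumes u: "u \<in> carrier G" and v: "v \<in> carrier G"
  shows "word_length (inv u \<otimes> v) \<le> word_length (coset_rep (H #> u))
    + nat \<bar>\<psi> (H_part v) - \<psi> (H_part u)\<bar> * word_length generator + word_length (coset_rep (H #> v))"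
proof -
  define n where "n = \<psi> (H_part v) - \<psi> (H_part u)"
  have r: "coset_rep (H #> u) \<in> carrier G" "coset_rep (H #> v) \<in> carrier G"
    using coset_rep_closed u v by auto
  have gen: "generator \<in> carrier G" using generator_in_H H_subset by auto
  show ?thesis
    using inv_mult_eq_coset_rep_generator_pow[OF u v] r gen
      word_length_mult[of "inv (coset_rep (H #> u))" "generator [^] n \<otimes> coset_rep (H #> v)"]
      word_length_mult[of "generator [^] n" "coset_rep (H #> v)"] word_length_int_pow[OF gen, of n]
    by (simp add: n_def)
qed

lemma word_length_le_embedding_diff:
  obtains A B where "\<And>u v. u \<in> carrier G \<Longrightarrow> v \<in> carrier G \<Longrightarrow>
    int (word_length (inv u \<otimes> v)) \<le> A + B * \<bar>embedding u - embedding v\<bar>"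
    and "0 \<le> A" and "0 \<le> B"
proof -
  define R where "R = (\<Sum>c \<in> rcosets H. int (word_length (coset_rep c)))"
  define B where "B = int (word_length generator)"
  have rep_le: "int (word_length (coset_rep (H #> g))) \<le> R" if "g \<in> carrier G" for g
    unfolding R_def using rcosetsI[OF H_subset that] finite_rcosets
    by (intro member_le_sum[where f = "\<lambda>c. int (word_length (coset_rep c))"]) auto
  have "int (word_length (inv u \<otimes> v)) \<le> 2 * R + B * \<bar>embedding u - embedding v\<bar>"
    if u: "u \<in> carrier G" and v: "v \<in> carrier G" for u v
  proof -
    define n where "n = \<psi> (H_part v) - \<psi> (H_part u)"
    have "int (word_length (inv u \<otimes> v))
        \<le> int (word_length (coset_rep (H #> u))) + \<bar>n\<bar> * B + int (word_length (coset_rep (H #> v)))"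
      using word_length_inv_mult_le[OF u v] unfolding n_def B_def zle_int[symmetric] by simp
    moreover have "\<bar>n\<bar> \<le> \<bar>embedding u - embedding v\<bar>"
      using abs_\<psi>_H_part_diff_le[OF u v] by (simp add: n_def abs_minus_commute)
    then have "\<bar>n\<bar> * B \<le> B * \<bar>embedding u - embedding v\<bar>"
      using mult_right_mono[of "\<bar>n\<bar>" "\<bar>embedding u - embedding v\<bar>" B] by (simp add: B_def mult.commute)
    ultimately show ?thesis using rep_le[OF u] rep_le[OF v] by linarith
  qed
  moreover have "0 \<le> 2 * R" by (simp add: R_def sum_nonneg)
  moreover have "0 \<le> B" by (simp add: B_def)
  ultimately show ?thesis by (rule that)
qed

theorem bilipschitz_embeddable_word_dist:
  "bilipschitz_embeddable_real (carrier G) (\<lambda>u v. real (word_dist G S u v))"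
proof -
  obtain A B where lower: "\<And>u v. u \<in> carrier G \<Longrightarrow> v \<in> carrier G \<Longrightarrow>
      int (word_length (inv u \<otimes> v)) \<le> A + B * \<bar>embedding u - embedding v\<bar>"
    and "0 \<le> A" "0 \<le> B"
    using word_length_le_embedding_diff by blast
  obtain C where upper: "\<And>u v. u \<in> carrier G \<Longrightarrow> v \<in> carrier G \<Longrightarrow>
      \<bar>embedding u - embedding v\<bar> \<le> C * int (word_length (inv u \<otimes> v))"
    using embedding_lipschitz by blast
  show ?thesis
  proof (rule bilipschitz_embeddable_realI[where f = "\<lambda>g. of_int (embedding g)"
        and a = "of_int A" and b = "of_int B" and c = "of_int C"])
    fix u v assume u: "u \<in> carrier G" and v: "v \<in> carrier G"
    show "1 \<le> \<bar>real_of_int (embedding u) - of_int (embedding v)\<bar>" if "u \<noteq> v"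
      using inj_onD[OF inj_on_embedding _ u v] that by linarith
    show "real (word_dist G S u v) \<le> of_int A + of_int B * \<bar>of_int (embedding u) - of_int (embedding v)\<bar>"
    proof -
      have "real_of_int (int (word_length (inv u \<otimes> v))) \<le> of_int (A + B * \<bar>embedding u - embedding v\<bar>)"
        using lower[OF u v] by (simp only: of_int_le_iff)
      then show ?thesis by (simp add: word_dist_eq_word_length)
    qed
    show "\<bar>real_of_int (embedding u) - of_int (embedding v)\<bar> \<le> of_int C * real (word_dist G S u v)"
    proof -
      have "real_of_int \<bar>embedding u - embedding v\<bar> \<le> of_int (C * int (word_length (inv u \<otimes> v)))"
        using upper[OF u v] by (simp only: of_int_le_iff)
      then show ?thesis by (simp add: word_dist_eq_word_length)
    qed
  qed (use \<open>0 \<le> A\<close> \<open>0 \<le> B\<close> in \<open>simp_all add: word_dist_eq_word_length\<close>)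
qed

end

theorem propositionP:
  fixes G :: "('a, 'b) monoid_scheme"
  assumes "group G"
    and "finitely_generated G"
    and "\<exists>H. subgroup H G \<and> finite (rcosets\<^bsub>G\<^esub> H) \<and> G\<lparr>carrier := H\<rparr> \<cong> integer_group"
  shows "\<forall>S. finite S \<and> S \<subseteq> carrier G \<and> generate G S = carrier G \<longrightarrow>
           bilipschitz_embeddable_real (carrier G) (\<lambda>u v. real (word_dist G S u v))"
proof (intro allI impI)
  fix S assume S: "finite S \<and> S \<subseteq> carrier G \<and> generate G S = carrier G"
  obtain H where H: "subgroup H G" "finite (rcosets\<^bsub>G\<^esub> H)" "G\<lparr>carrier := H\<rparr> \<cong> integer_group"
    using assms(3) by blast
  obtain \<psi> where \<psi>: "\<psi> \<in> iso (G\<lparr>carrier := H\<rparr>) integer_group"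
    using H(3) unfolding is_iso_def by blast
  obtain index :: "'a set \<Rightarrow> nat" and k where index: "index ` (rcosets\<^bsub>G\<^esub> H) = {i. i < k}"
    "inj_on index (rcosets\<^bsub>G\<^esub> H)"
    using finite_imp_inj_to_nat_seg[OF H(2)] by blast
  interpret virtually_integer_generated G H \<psi> index k S
    by (intro virtually_integer_generated.intro virtually_integer.intro generated_group.intro
        virtually_integer_axioms.intro generated_group_axioms.intro virtually_integer_generated_axioms.intro)
      (use assms(1) H \<psi> S index in auto)
  show "bilipschitz_embeddable_real (carrier G) (\<lambda>u v. real (word_dist G S u v))"
    by (rule bilipschitz_embeddable_word_dist)
qed

end
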